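(* For each $n\ge1$ and $\epsilon\ge0$, the set $D^\epsilon_n=\{\vec w\in\mathcal{W}^n:N^\epsilon_n(\vec w)\ne\emptyset\}$ is closed. Moreover, there exists a universally measurable map $\hat x:D^\epsilon_n\to\mathcal{X}^n$ such that $\hat x(\vec w)\in N^\epsilon_n(\vec w)$ for each $\vec w\in D^\epsilon_n$.
   Context: Standing assumptions: $\mathcal{X}$ compact metric space, $\mathcal{W}$ complete separable metric space; $\mathcal{P}(S)$ = Borel probability measures on $S$ with the weak topology. $\mathcal{C}$ maps $w$ to a nonempty closed $\mathcal{C}(w)\subset\mathcal{X}$, continuous in the sense that $\mathrm{Gr}(\mathcal{C})=\{(w,x):x\in\mathcal{C}(w)\}$ is closed and whenever $w_n\to w$, $x\in\mathcal{C}(w)$ there exist $n_k$, $x_{n_k}\in\mathcal{C}(w_{n_k})$ with $x_{n_k}\to x$. $F:\mathcal{P}(\mathcal{W}\times\mathcal{X})\times\mathcal{W}\times\mathcal{X}\to\mathbb{R}$ bounded continuous. $N^\epsilon_n(w_1,\dots,w_n)$ is the set of $\epsilon$-Nash equilibria with type vector $(w_1,\dots,w_n)$, i.e. of $\vec x=(x_1,\dots,x_n)\in\mathcal{X}^n$ with $x_i\in\mathcal{C}(w_i)$ and, writing $m=\frac1n\sum_k\delta_{(w_k,x_k)}$, $F(m,w_i,x_i)-\inf_{y\in\mathcal{C}(w_i)}F(m+\frac1n(\delta_{(w_i,y)}-\delta_{(w_i,x_i)}),w_i,y)\le\epsilon$ for all $i$. *)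

theory Defs
  imports "HOL-Probability.Probability"
begin

definition prob_measures :: "('a::topological_space) measure set" where
  "prob_measures = {M. prob_space M \<and> sets M = sets borel}"

definition weak_topology :: "('a::topological_space) measure topology" where
  "weak_topology = topology_generated_by
     {{M \<in> prob_measures. (\<integral>z. f z \<partial>M) \<in> U} | (f :: 'a \<Rightarrow> real) U.
        continuous_on UNIV f \<and> bounded (range f) \<and> open U}"

definition empirical :: "('w::topological_space) ^ 'n \<Rightarrow> ('x::topological_space) ^ 'n \<Rightarrow> ('w \<times> 'x) measure" where
  "empirical w x = measure_of UNIV (sets borel)
     (\<lambda>A. ennreal (real (card {k. (w $ k, x $ k) \<in> A}) / real CARD('n)))"

definition vupd :: "'x ^ 'n \<Rightarrow> 'n \<Rightarrow> 'x \<Rightarrow> 'x ^ 'n" where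
  "vupd x i y = (\<chi> j. if j = i then y else x $ j)"

text \<open>The set of epsilon-Nash equilibria N^eps_n(w).  The deviation measure
  m + (1/n)(delta_(w_i,y) - delta_(w_i,x_i)) is the empirical measure of the profile
  with x_i replaced by y.\<close>
definition nash :: "real \<Rightarrow> ('w \<Rightarrow> 'x set) \<Rightarrow> (('w \<times> 'x) measure \<Rightarrow> 'w \<Rightarrow> 'x \<Rightarrow> real)
    \<Rightarrow> ('w::topological_space) ^ 'n \<Rightarrow> (('x::topological_space) ^ 'n) set" where
  "nash eps C F w = {x. (\<forall>i. x $ i \<in> C (w $ i)) \<and>
     (\<forall>i. F (empirical w x) (w $ i) (x $ i)
          - (INF y\<in>C (w $ i). F (empirical w (vupd x i y)) (w $ i) y) \<le> eps)}"

definition nash_domain :: "real \<Rightarrow> ('w \<Rightarrow> ('x::topological_space) set) \<Rightarrow> (('w \<times> 'x) measure \<Rightarrow> 'w \<Rightarrow> 'x \<Rightarrow> real)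
    \<Rightarrow> (('w::topological_space) ^ 'n) set" where
  "nash_domain eps C F = {w. nash eps C F w \<noteq> {}}"

definition univ_measurable_sets :: "('a::topological_space) set \<Rightarrow> 'a set set" where
  "univ_measurable_sets D = {A. A \<subseteq> D \<and>
     (\<forall>M. prob_space M \<and> sets M = sets (restrict_space borel D) \<longrightarrow> A \<in> sets (completion M))}"

definition univ_measurable_on :: "('a::topological_space) set \<Rightarrow> ('a \<Rightarrow> 'b::topological_space) \<Rightarrow> bool" where
  "univ_measurable_on D h \<longleftrightarrow> (\<forall>B \<in> sets borel. {v \<in> D. h v \<in> B} \<in> univ_measurable_sets D)"

end

(* The set of equilibria depends upper-semicontinuously on the type vector: a limit of
   epsilon-equilibria is an epsilon-equilibrium, because by lower hemicontinuity of C every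
   deviation available in the limit is approximated, along a subsequence, by deviations
   available before, and F is continuous in the empirical measure.  As action profiles range
   over the compact space X^n, the sets of type vectors whose equilibria meet a closed set K
   are closed; K = X^n gives closedness of the domain.  A Borel selection then comes from the
   Kuratowski-Ryll-Nardzewski construction: refine the set of equilibria along finer and finer
   finite nets of X^n, always keeping the first ball that meets the current set; the nested
   sets shrink to a point that depends measurably on the types, and Borel maps are
   universally measurable. *)

theory Submission
  imports Defs
begin

lemma decseq_closed_Inter_nonempty:
  fixes F :: "nat \<Rightarrow> 'a::topological_space set"
  assumes "compact (UNIV :: 'a set)" and "\<And>n. closed (F n)" and "\<And>n. F n \<noteq> {}"
    and "decseq F"
  shows "\<exists>x. \<forall>n. x \<in> F n"
proof -
  have "UNIV \<inter> (\<Inter>n. F n) \<noteq> {}"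
  proof (rule compact_imp_fip_image[OF assms(1)])
    fix N :: "nat set" assume "finite N"
    then have "F (Max (insert 0 N)) \<subseteq> F n" if "n \<in> N" for n
      by (intro decseqD[OF \<open>decseq F\<close>] Max_ge) (use that in auto)
    moreover obtain x where "x \<in> F (Max (insert 0 N))"
      using assms(3) by blast
    ultimately show "UNIV \<inter> (\<Inter>n\<in>N. F n) \<noteq> {}"
      by blast
  qed (use assms(2) in auto)
  then show ?thesis by blast
qed

lemma compact_UNIV_finite_net:
  assumes "compact (UNIV :: 'a::metric_space set)" and "e > 0"
  shows "\<exists>T :: 'a list. \<forall>y. \<exists>t\<in>set T. dist t y \<le> e"
proof -
  obtain S :: "'a set" where "finite S" and cover: "UNIV \<subseteq> (\<Union>t\<in>S. ball t e)"
    using seq_compact_imp_totally_bounded[OF compact_imp_seq_compact[OF assms(1)], rule_format,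
        OF assms(2)]
    by (elim exE conjE) blast
  obtain T where T: "set T = S"
    using \<open>finite S\<close> finite_list by blast
  have "\<exists>t\<in>set T. dist t y \<le> e" for y
  proof -
    obtain t where "t \<in> S" "y \<in> ball t e"
      using subsetD[OF cover UNIV_I] by (rule UN_E)
    then show ?thesis
      using T by (auto intro!: bexI[of _ t])
  qed
  then show ?thesis
    by blast
qed

definition first_hit :: "'a::metric_space list \<Rightarrow> real \<Rightarrow> 'a set \<Rightarrow> nat" where
  "first_hit T e S = (LEAST j. j < length T \<and> S \<inter> cball (T ! j) e \<noteq> {})"

text \<open>Iterating this along finer and finer nets is the
  Kuratowski-Ryll-Nardzewski construction of a measurable selection.\<close>

definition net_refine :: "'a::metric_space list \<Rightarrow> real \<Rightarrow> 'a set \<Rightarrow> 'a set" where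
  "net_refine T e S = S \<inter> cball (T ! first_hit T e S) e"

lemma net_refine_subset: "net_refine T e S \<subseteq> S"
  by (simp add: net_refine_def)

lemma closed_net_refine: "closed S \<Longrightarrow> closed (net_refine T e S)"
  by (simp add: net_refine_def closed_Int)

lemma dist_le_net_refine:
  assumes "x \<in> net_refine T e S" and "y \<in> net_refine T e S"
  shows "dist x y \<le> 2 * e"
proof -
  let ?c = "T ! first_hit T e S"
  have "dist ?c x \<le> e" "dist ?c y \<le> e"
    using assms by (simp_all add: net_refine_def)
  then show ?thesis
    using dist_triangle3[of x y ?c] by linarith
qed

lemma first_hit:
  assumes net: "\<And>y. \<exists>t\<in>set T. dist t y \<le> e" and "S \<noteq> {}"
  shows "first_hit T e S < length T" and "S \<inter> cball (T ! first_hit T e S) e \<noteq> {}"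
proof -
  obtain y where "y \<in> S"
    using \<open>S \<noteq> {}\<close> by blast
  obtain t where "t \<in> set T" "dist t y \<le> e"
    using net by blast
  then obtain j where "j < length T" "y \<in> S \<inter> cball (T ! j) e"
    using \<open>y \<in> S\<close> by (auto simp: in_set_conv_nth)
  then have "j < length T \<and> S \<inter> cball (T ! j) e \<noteq> {}"
    by blast
  then have "first_hit T e S < length T \<and> S \<inter> cball (T ! first_hit T e S) e \<noteq> {}"
    unfolding first_hit_def by (rule LeastI)
  then show "first_hit T e S < length T" and "S \<inter> cball (T ! first_hit T e S) e \<noteq> {}"
    by simp_all
qed

lemma before_first_hit:
  assumes "\<And>y. \<exists>t\<in>set T. dist t y \<le> e" and "S \<noteq> {}" and "i < first_hit T e S"
  shows "S \<inter> cball (T ! i) e = {}"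
proof -
  have "\<not> (i < length T \<and> S \<inter> cball (T ! i) e \<noteq> {})"
    using \<open>i < first_hit T e S\<close> unfolding first_hit_def by (rule not_less_Least)
  moreover have "i < length T"
    using first_hit(1)[OF assms(1,2)] \<open>i < first_hit T e S\<close> by simp
  ultimately show ?thesis
    by simp
qed

lemma first_hit_eqI:
  assumes "\<And>y. \<exists>t\<in>set T. dist t y \<le> e"
    and "S \<inter> cball (T ! j) e \<noteq> {}" and "\<And>i. i < j \<Longrightarrow> S \<inter> cball (T ! i) e = {}"
  shows "first_hit T e S = j"
proof -
  have "S \<noteq> {}"
    using assms(2) by blast
  show ?thesis
  proof (rule linorder_cases[of "first_hit T e S" j])
    assume "first_hit T e S < j"
    with assms(3) first_hit(2)[OF assms(1) \<open>S \<noteq> {}\<close>] show ?thesis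
      by simp
  next
    assume "j < first_hit T e S"
    with assms(2) before_first_hit[OF assms(1) \<open>S \<noteq> {}\<close>] show ?thesis
      by simp
  qed
qed

lemma net_refine_nonempty:
  "(\<And>y. \<exists>t\<in>set T. dist t y \<le> e) \<Longrightarrow> S \<noteq> {} \<Longrightarrow> net_refine T e S \<noteq> {}"
  unfolding net_refine_def by (rule first_hit(2))

lemma net_refine_hits_measurable:
  assumes net: "\<And>y. \<exists>t\<in>set T. dist t y \<le> e"
    and hits: "\<And>K. closed K \<Longrightarrow> {w \<in> space M. \<Psi> w \<inter> K \<noteq> {}} \<in> sets M"
    and "closed K"
  shows "{w \<in> space M. net_refine T e (\<Psi> w) \<inter> K \<noteq> {}} \<in> sets M"
proof -
  define H where "H K = {w \<in> space M. \<Psi> w \<inter> K \<noteq> {}}" for K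
  have eq: "{w \<in> space M. net_refine T e (\<Psi> w) \<inter> K \<noteq> {}} =
      (\<Union>j<length T. H (cball (T ! j) e \<inter> K) - (\<Union>i<j. H (cball (T ! i) e)))"
  proof (intro equalityI subsetI)
    fix w assume w: "w \<in> {w \<in> space M. net_refine T e (\<Psi> w) \<inter> K \<noteq> {}}"
    define j where "j = first_hit T e (\<Psi> w)"
    have "\<Psi> w \<noteq> {}"
      using w net_refine_subset by blast
    then have "j < length T" and "\<And>i. i < j \<Longrightarrow> \<Psi> w \<inter> cball (T ! i) e = {}"
      unfolding j_def by (simp_all add: first_hit(1)[OF net] before_first_hit[OF net])
    moreover have "\<Psi> w \<inter> (cball (T ! j) e \<inter> K) \<noteq> {}"
      using w by (simp add: j_def net_refine_def Int_assoc)
    ultimately show "w \<in> (\<Union>j<length T. H (cball (T ! j) e \<inter> K) - (\<Union>i<j. H (cball (T ! i) e)))"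
      using w unfolding H_def by blast
  next
    fix w assume "w \<in> (\<Union>j<length T. H (cball (T ! j) e \<inter> K) - (\<Union>i<j. H (cball (T ! i) e)))"
    then obtain j where w: "w \<in> space M" "\<Psi> w \<inter> (cball (T ! j) e \<inter> K) \<noteq> {}"
      and before: "\<And>i. i < j \<Longrightarrow> \<Psi> w \<inter> cball (T ! i) e = {}"
      unfolding H_def by blast
    have "first_hit T e (\<Psi> w) = j"
    proof (rule first_hit_eqI[OF net])
      show "\<Psi> w \<inter> cball (T ! j) e \<noteq> {}"
        using w(2) by blast
    qed (rule before)
    with w show "w \<in> {w \<in> space M. net_refine T e (\<Psi> w) \<inter> K \<noteq> {}}"
      by (simp add: net_refine_def Int_assoc)
  qed
  have H_sets: "H (cball c e \<inter> K) \<in> sets M" "H (cball c e) \<in> sets M" for c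
    unfolding H_def by (simp_all add: hits closed_Int \<open>closed K\<close>)
  have "H (cball (T ! j) e \<inter> K) - (\<Union>i<j. H (cball (T ! i) e)) \<in> sets M" for j
    by (intro sets.Diff sets.finite_UN finite_lessThan H_sets)
  then show ?thesis
    unfolding eq by (intro sets.finite_UN finite_lessThan)
qed

lemma dist_le_inverse_Suc_imp_eq:
  assumes "\<And>k. dist x y \<le> 2 * inverse (real (Suc k))"
  shows "x = y"
proof (rule ccontr)
  assume "x \<noteq> y"
  then obtain n where "n > 0" "inverse (real n) < dist x y / 2"
    using ex_inverse_of_nat_less[of "dist x y / 2"] by auto
  then have "2 * inverse (real (Suc (n - 1))) < dist x y"
    by simp
  with assms show False
    by (meson not_le)
qed

lemma measurable_nested_selection:
  fixes \<Psi> :: "nat \<Rightarrow> 'a \<Rightarrow> 'b::topological_space set"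
  assumes compact: "compact (UNIV :: 'b set)"
    and closed: "\<And>k w. closed (\<Psi> k w)" and nonempty: "\<And>k w. \<Psi> k w \<noteq> {}"
    and decseq: "\<And>w. decseq (\<lambda>k. \<Psi> k w)"
    and unique: "\<And>w x y. (\<And>k. x \<in> \<Psi> k w) \<Longrightarrow> (\<And>k. y \<in> \<Psi> k w) \<Longrightarrow> x = y"
    and hits: "\<And>k K. closed K \<Longrightarrow> {w \<in> space M. \<Psi> k w \<inter> K \<noteq> {}} \<in> sets M"
  obtains h where "h \<in> borel_measurable M" and "\<And>k w. h w \<in> \<Psi> k w"
proof -
  define h where "h w = (SOME x. \<forall>k. x \<in> \<Psi> k w)" for w
  have h_in: "h w \<in> \<Psi> k w" for k w
  proof -
    have "\<exists>x. \<forall>k. x \<in> \<Psi> k w"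
      by (rule decseq_closed_Inter_nonempty[OF compact closed nonempty decseq])
    then show ?thesis
      unfolding h_def by (rule someI2_ex) blast
  qed
  have preimage: "h -` K \<inter> space M = (\<Inter>k. {w \<in> space M. \<Psi> k w \<inter> K \<noteq> {}})"
    if "closed K" for K
  proof (intro equalityI subsetI)
    fix w assume "w \<in> h -` K \<inter> space M"
    then show "w \<in> (\<Inter>k. {w \<in> space M. \<Psi> k w \<inter> K \<noteq> {}})"
      using h_in by blast
  next
    fix w assume w: "w \<in> (\<Inter>k. {w \<in> space M. \<Psi> k w \<inter> K \<noteq> {}})"
    have "\<exists>z. \<forall>k. z \<in> \<Psi> k w \<inter> K"
    proof (rule decseq_closed_Inter_nonempty[OF compact])
      show "closed (\<Psi> k w \<inter> K)" for k
        using closed \<open>closed K\<close> by (rule closed_Int)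
      show "\<Psi> k w \<inter> K \<noteq> {}" for k
        using w by simp
      show "decseq (\<lambda>k. \<Psi> k w \<inter> K)"
        using decseq[of w] by (auto simp: decseq_def)
    qed
    then obtain z where z: "\<And>k. z \<in> \<Psi> k w \<inter> K"
      by blast
    have "z = h w"
      by (rule unique[of z w "h w"]) (use z h_in in simp_all)
    with z w show "w \<in> h -` K \<inter> space M"
      by simp
  qed
  have "h \<in> measurable M (sigma UNIV (Collect closed))"
  proof (rule measurable_measure_of)
    fix K :: "'b set" assume "K \<in> Collect closed"
    then have "closed K"
      by simp
    have "(\<Inter>k. {w \<in> space M. \<Psi> k w \<inter> K \<noteq> {}}) \<in> sets M"
      by (rule sets.countable_INT) (auto intro: hits[OF \<open>closed K\<close>])
    then show "h -` K \<inter> space M \<in> sets M"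
      by (simp add: preimage[OF \<open>closed K\<close>])
  qed simp_all
  then show ?thesis
    by (intro that[OF _ h_in]) (simp add: borel_eq_closed)
qed

lemma measurable_selection_nonempty:
  fixes \<Phi> :: "'a \<Rightarrow> 'b::metric_space set"
  assumes compact: "compact (UNIV :: 'b set)"
    and closed: "\<And>w. closed (\<Phi> w)" and nonempty: "\<And>w. \<Phi> w \<noteq> {}"
    and hits: "\<And>K. closed K \<Longrightarrow> {w \<in> space M. \<Phi> w \<inter> K \<noteq> {}} \<in> sets M"
  obtains h where "h \<in> borel_measurable M" and "\<And>w. h w \<in> \<Phi> w"
proof -
  define e where "e k = inverse (real (Suc k))" for k
  have "\<forall>k. \<exists>T :: 'b list. \<forall>y. \<exists>t\<in>set T. dist t y \<le> e k"
    using compact_UNIV_finite_net[OF compact] by (simp add: e_def)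
  then obtain T :: "nat \<Rightarrow> 'b list" where net: "\<And>k y. \<exists>t\<in>set (T k). dist t y \<le> e k"
    by metis
  define \<Psi> where "\<Psi> k w = rec_nat (\<Phi> w) (\<lambda>k. net_refine (T k) (e k)) k" for k w
  have \<Psi>_0: "\<Psi> 0 w = \<Phi> w" and \<Psi>_Suc: "\<Psi> (Suc k) w = net_refine (T k) (e k) (\<Psi> k w)" for k w
    by (simp_all add: \<Psi>_def)
  obtain h where "h \<in> borel_measurable M" and h: "\<And>k w. h w \<in> \<Psi> k w"
  proof (rule measurable_nested_selection[OF compact])
    show "closed (\<Psi> k w)" for k w
      by (induction k) (simp_all add: \<Psi>_0 \<Psi>_Suc closed closed_net_refine)
    show "\<Psi> k w \<noteq> {}" for k w
      by (induction k) (simp_all add: \<Psi>_0 \<Psi>_Suc nonempty net_refine_nonempty[OF net])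
    show "decseq (\<lambda>k. \<Psi> k w)" for w
      by (rule decseq_SucI) (simp add: \<Psi>_Suc net_refine_subset)
    show "x = y" if "\<And>k. x \<in> \<Psi> k w" "\<And>k. y \<in> \<Psi> k w" for w x y
    proof (rule dist_le_inverse_Suc_imp_eq)
      show "dist x y \<le> 2 * inverse (real (Suc k))" for k
        using dist_le_net_refine[of x "T k" "e k" "\<Psi> k w" y] that[of "Suc k"]
        by (simp add: \<Psi>_Suc e_def)
    qed
    show "{w \<in> space M. \<Psi> k w \<inter> K \<noteq> {}} \<in> sets M" if "closed K" for k K
      using that
    proof (induction k arbitrary: K)
      case 0
      then show ?case by (simp add: \<Psi>_0 hits)
    next
      case (Suc k)
      show ?case
        unfolding \<Psi>_Suc by (rule net_refine_hits_measurable[OF net Suc.IH Suc.prems])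
    qed
  qed blast
  then show ?thesis
    using that h[where k = 0] by (simp add: \<Psi>_0)
qed

theorem measurable_selection:
  fixes \<Phi> :: "'a \<Rightarrow> 'b::metric_space set"
  assumes compact: "compact (UNIV :: 'b set)" and closed: "\<And>w. closed (\<Phi> w)"
    and hits: "\<And>K. closed K \<Longrightarrow> {w \<in> space M. \<Phi> w \<inter> K \<noteq> {}} \<in> sets M"
  obtains h where "h \<in> borel_measurable M" and "\<And>w. \<Phi> w \<noteq> {} \<Longrightarrow> h w \<in> \<Phi> w"
proof -
  define \<Phi>' where "\<Phi>' w = (if \<Phi> w = {} then UNIV else \<Phi> w)" for w
  obtain h where hm: "h \<in> borel_measurable M" and h: "\<And>w. h w \<in> \<Phi>' w"
  proof (rule measurable_selection_nonempty[OF compact])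
    show "closed (\<Phi>' w)" "\<Phi>' w \<noteq> {}" for w
      by (simp_all add: \<Phi>'_def closed)
    fix K :: "'b set" assume "closed K"
    show "{w \<in> space M. \<Phi>' w \<inter> K \<noteq> {}} \<in> sets M"
    proof (cases "K = {}")
      case False
      then have "{w \<in> space M. \<Phi>' w \<inter> K \<noteq> {}} =
          {w \<in> space M. \<Phi> w \<inter> K \<noteq> {}} \<union> (space M - {w \<in> space M. \<Phi> w \<inter> UNIV \<noteq> {}})"
        by (auto simp: \<Phi>'_def)
      then show ?thesis
        by (simp only:) (intro sets.Un sets.Diff sets.top hits closed_UNIV \<open>closed K\<close>)
    qed simp
  qed blast
  have "h w \<in> \<Phi> w" if "\<Phi> w \<noteq> {}" for w
    using h[of w] that by (simp add: \<Phi>'_def)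
  with hm show ?thesis
    by (rule that)
qed

lemma convergent_subseq_components:
  fixes f :: "nat \<Rightarrow> 'x::metric_space ^ 'n"
  assumes "compact (UNIV :: 'x set)" and "finite I"
  shows "\<exists>l r. strict_mono r \<and> (\<forall>i\<in>I. (\<lambda>k. f (r k) $ i) \<longlonglongrightarrow> l $ i)"
  using \<open>finite I\<close>
proof (induction I rule: finite_induct)
  case empty
  show ?case
    using strict_mono_id by blast
next
  case (insert i I)
  then obtain l r where r: "strict_mono r" and lim: "\<forall>j\<in>I. (\<lambda>k. f (r k) $ j) \<longlonglongrightarrow> l $ j"
    by blast
  have "seq_compact (UNIV :: 'x set)"
    using \<open>compact UNIV\<close> compact_eq_seq_compact_metric by blast
  then obtain a s where s: "strict_mono s" and a: "((\<lambda>k. f (r k) $ i) \<circ> s) \<longlonglongrightarrow> a"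
    unfolding seq_compact_def by blast
  define l' where "l' = (\<chi> j. if j = i then a else l $ j)"
  have "(\<lambda>k. f ((r \<circ> s) k) $ j) \<longlonglongrightarrow> l' $ j" if "j \<in> insert i I" for j
  proof (cases "j = i")
    case True
    then show ?thesis
      using a by (simp add: l'_def o_def)
  next
    case False
    with that lim have "((\<lambda>k. f (r k) $ j) \<circ> s) \<longlonglongrightarrow> l $ j"
      using s LIMSEQ_subseq_LIMSEQ by blast
    with False show ?thesis
      by (simp add: l'_def o_def)
  qed
  moreover have "strict_mono (r \<circ> s)"
    using r s by (rule strict_mono_o)
  ultimately show ?case
    by blast
qed

lemma compact_UNIV_vec:
  assumes "compact (UNIV :: 'x::metric_space set)"
  shows "compact (UNIV :: ('x ^ 'n) set)"
  unfolding compact_eq_seq_compact_metric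
proof (rule seq_compactI)
  fix f :: "nat \<Rightarrow> 'x ^ 'n"
  obtain l r where "strict_mono r" "\<forall>i\<in>UNIV. (\<lambda>k. f (r k) $ i) \<longlonglongrightarrow> l $ i"
    using convergent_subseq_components[OF assms, of UNIV f] by auto
  then show "\<exists>l\<in>UNIV. \<exists>r. strict_mono r \<and> (f \<circ> r) \<longlonglongrightarrow> l"
    by (auto intro!: vec_tendstoI simp: o_def)
qed

lemma measurable_empirical_profile:
  "(\<lambda>k. (w $ k, x $ k)) \<in> uniform_count_measure (UNIV :: 'n::finite set) \<rightarrow>\<^sub>M borel"
  by (auto simp: measurable_def sets_uniform_count_measure space_uniform_count_measure)

lemma empirical_eq_distr:
  fixes w :: "'w::topological_space ^ 'n" and x :: "'x::topological_space ^ 'n"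
  shows "empirical w x = distr (uniform_count_measure UNIV) borel (\<lambda>k. (w $ k, x $ k))"
    (is "_ = ?M")
proof -
  have "emeasure ?M A = ennreal (real (card {k. (w $ k, x $ k) \<in> A}) / real CARD('n))"
    if "A \<in> sets borel" for A
    using emeasure_distr[OF measurable_empirical_profile that]
    by (simp add: space_uniform_count_measure emeasure_uniform_count_measure vimage_def)
  then have "empirical w x = measure_of UNIV (sets borel) (emeasure ?M)"
    unfolding empirical_def
    by (intro measure_of_eq) (simp_all add: sets.sigma_sets_eq[of borel, simplified])
  also have "\<dots> = ?M"
    using measure_of_of_measure[of ?M] by simp
  finally show ?thesis .
qed

lemma empirical_in_prob_measures: "empirical w x \<in> prob_measures"
proof -
  have "prob_space (uniform_count_measure (UNIV :: 'n::finite set))"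
    by (rule prob_space_uniform_count_measure) simp_all
  then have "prob_space (empirical w x)"
    unfolding empirical_eq_distr
    by (rule prob_space.prob_space_distr[OF _ measurable_empirical_profile])
  then show ?thesis
    by (simp add: prob_measures_def empirical_eq_distr)
qed

lemma integral_empirical:
  fixes w :: "'w::topological_space ^ 'n" and x :: "'x::topological_space ^ 'n"
  assumes "f \<in> borel_measurable borel"
  shows "(\<integral>z. f z \<partial>empirical w x) = (\<Sum>k\<in>UNIV. f (w $ k, x $ k)) / real CARD('n)"
  unfolding empirical_eq_distr
  by (simp add: integral_distr[OF measurable_empirical_profile assms] integral_uniform_count_measure)

lemma continuous_map_weak_topologyI:
  fixes g :: "'a \<Rightarrow> 'b::topological_space measure"
  assumes prob: "\<And>a. a \<in> topspace X \<Longrightarrow> g a \<in> prob_measures"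
    and integral: "\<And>f :: 'b \<Rightarrow> real. continuous_on UNIV f \<Longrightarrow> bounded (range f) \<Longrightarrow>
      continuous_map X euclideanreal (\<lambda>a. \<integral>z. f z \<partial>g a)"
  shows "continuous_map X weak_topology g"
proof -
  let ?S = "{{M \<in> prob_measures. (\<integral>z. f z \<partial>M) \<in> U} | (f :: 'b \<Rightarrow> real) U.
    continuous_on UNIV f \<and> bounded (range f) \<and> open U}"
  show ?thesis
    unfolding weak_topology_def
  proof (rule continuous_on_generated_topo)
    fix U assume "U \<in> ?S"
    then obtain f :: "'b \<Rightarrow> real" and V where U: "U = {M \<in> prob_measures. (\<integral>z. f z \<partial>M) \<in> V}"
      and f: "continuous_on UNIV f" "bounded (range f)" and "open V"
      by blast
    have "g -` U \<inter> topspace X = {a \<in> topspace X. (\<integral>z. f z \<partial>g a) \<in> V}"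
      using prob by (auto simp: U)
    then show "openin X (g -` U \<inter> topspace X)"
      using openin_continuous_map_preimage[OF integral[OF f]] \<open>open V\<close> by simp
  next
    have "{M \<in> prob_measures. (\<integral>z. 0 \<partial>M) \<in> (UNIV :: real set)} \<in> ?S"
      by (intro CollectI exI[of _ "\<lambda>_. 0 :: real"] exI[of _ UNIV]) auto
    then have "prob_measures \<in> ?S"
      by simp
    then show "g ` topspace X \<subseteq> \<Union> ?S"
      using prob by blast
  qed
qed

lemma continuous_map_empirical:
  "continuous_map euclidean weak_topology
     (\<lambda>p :: ('w::topological_space ^ 'n) \<times> ('x::topological_space ^ 'n). empirical (fst p) (snd p))"
proof (rule continuous_map_weak_topologyI)
  fix f :: "'w \<times> 'x \<Rightarrow> real" assume "continuous_on UNIV f"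
  then have "continuous_on UNIV (\<lambda>p :: ('w ^ 'n) \<times> ('x ^ 'n).
      (\<Sum>k\<in>UNIV. f (fst p $ k, snd p $ k)) / real CARD('n))"
    by (intro continuous_intros continuous_on_compose2[OF \<open>continuous_on UNIV f\<close>]) auto
  then show "continuous_map euclidean euclideanreal
      (\<lambda>p :: ('w ^ 'n) \<times> ('x ^ 'n). \<integral>z. f z \<partial>empirical (fst p) (snd p))"
    by (simp add: integral_empirical borel_measurable_continuous_onI[OF \<open>continuous_on UNIV f\<close>])
qed (rule empirical_in_prob_measures)

lemma tendsto_empirical_payoff:
  fixes F :: "('w::topological_space \<times> 'x::topological_space) measure \<Rightarrow> 'w \<Rightarrow> 'x \<Rightarrow> real"
    and w :: "'i \<Rightarrow> 'w ^ 'n" and x :: "'i \<Rightarrow> 'x ^ 'n"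
  assumes F_cont: "continuous_map (prod_topology weak_topology (prod_topology euclidean euclidean))
      euclideanreal (\<lambda>(m, w, x). F m w x)"
    and "(w \<longlongrightarrow> w0) L" and "(x \<longlongrightarrow> x0) L" and "(a \<longlongrightarrow> a0) L" and "(b \<longlongrightarrow> b0) L"
  shows "((\<lambda>k. F (empirical (w k) (x k)) (a k) (b k)) \<longlongrightarrow> F (empirical w0 x0) a0 b0) L"
proof -
  define \<Gamma> where "\<Gamma> p = (empirical (fst (fst p)) (snd (fst p)), snd p)"
    for p :: "(('w ^ 'n) \<times> ('x ^ 'n)) \<times> 'w \<times> 'x"
  have "continuous_map euclidean euclidean (fst :: (('w ^ 'n) \<times> ('x ^ 'n)) \<times> 'w \<times> 'x \<Rightarrow> _)"
    by (simp add: continuous_on_fst)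
  from continuous_map_compose[OF this continuous_map_empirical]
  have "continuous_map euclidean weak_topology
      (\<lambda>p :: (('w ^ 'n) \<times> ('x ^ 'n)) \<times> 'w \<times> 'x. empirical (fst (fst p)) (snd (fst p)))"
    by (simp add: o_def)
  then have "continuous_map euclidean (prod_topology weak_topology (prod_topology euclidean euclidean)) \<Gamma>"
    unfolding \<Gamma>_def by (intro continuous_map_pairedI) (simp_all add: continuous_on_snd)
  from continuous_map_compose[OF this F_cont]
  have cont: "continuous_on UNIV (\<lambda>p :: (('w ^ 'n) \<times> ('x ^ 'n)) \<times> 'w \<times> 'x.
      F (empirical (fst (fst p)) (snd (fst p))) (fst (snd p)) (snd (snd p)))"
    by (simp add: \<Gamma>_def o_def case_prod_beta)
  have "((\<lambda>k. ((w k, x k), a k, b k)) \<longlongrightarrow> ((w0, x0), a0, b0)) L"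
    by (intro tendsto_Pair assms(2-))
  from continuous_on_tendsto_compose[OF cont this] show ?thesis
    by simp
qed

lemma tendsto_vupd:
  assumes "(x \<longlongrightarrow> x0) L" and "(y \<longlongrightarrow> y0) L"
  shows "((\<lambda>k. vupd (x k) i (y k)) \<longlongrightarrow> vupd x0 i y0) L"
  unfolding vupd_def
proof (rule tendsto_vec_lambda)
  fix j
  show "((\<lambda>k. if j = i then y k else x k $ j) \<longlongrightarrow> (if j = i then y0 else x0 $ j)) L"
    using assms(2) tendsto_vec_nth[OF assms(1)] by (cases "j = i") simp_all
qed

lemma borel_measurable_imp_univ_measurable_on:
  assumes "h \<in> borel_measurable borel"
  shows "univ_measurable_on D h"
  unfolding univ_measurable_on_def univ_measurable_sets_def
proof (intro ballI CollectI conjI allI impI)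
  fix B :: "'b set" and M
  assume "B \<in> sets borel" and M: "prob_space M \<and> sets M = sets (restrict_space borel D)"
  have "h -` B \<in> sets borel"
    using measurable_sets[OF assms \<open>B \<in> sets borel\<close>] by simp
  then have "D \<inter> h -` B \<in> sets (restrict_space borel D)"
    by (auto simp: sets_restrict_space)
  moreover have "{v \<in> D. h v \<in> B} = D \<inter> h -` B"
    by blast
  ultimately show "{v \<in> D. h v \<in> B} \<in> sets (completion M)"
    using M by simp
qed blast

locale nash_game =
  fixes C :: "'w::metric_space \<Rightarrow> 'x::metric_space set"
    and F :: "('w \<times> 'x) measure \<Rightarrow> 'w \<Rightarrow> 'x \<Rightarrow> real"
  assumes C_nonempty: "\<And>w. C w \<noteq> {}"
    and C_graph_closed: "closed {(w, x). x \<in> C w}"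
    and C_lower: "\<And>ws w x. ws \<longlonglongrightarrow> w \<Longrightarrow> x \<in> C w \<Longrightarrow>
      \<exists>r xs. strict_mono r \<and> (\<forall>k. xs k \<in> C (ws (r k))) \<and> xs \<longlonglongrightarrow> x"
    and F_bounded: "\<exists>B. \<forall>m \<in> prob_measures. \<forall>w x. \<bar>F m w x\<bar> \<le> B"
    and F_cont: "continuous_map (prod_topology weak_topology (prod_topology euclidean euclidean))
      euclideanreal (\<lambda>(m, w, x). F m w x)"
begin

lemma bdd_below_empirical_payoff:
  "bdd_below ((\<lambda>y. F (empirical (u :: 'w ^ 'n) (g y :: 'x ^ 'n)) a y) ` S)"
proof -
  obtain B where B: "\<forall>m \<in> prob_measures. \<forall>w x. \<bar>F m w x\<bar> \<le> B"
    using F_bounded by blast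
  have "- B \<le> F (empirical u (g y)) a y" for y
  proof -
    have "\<bar>F (empirical u (g y)) a y\<bar> \<le> B"
      using B empirical_in_prob_measures by blast
    then show ?thesis
      by linarith
  qed
  then show ?thesis
    by (rule bdd_belowI2)
qed

lemma mem_nash_iff:
  "x \<in> nash eps C F w \<longleftrightarrow> (\<forall>i. x $ i \<in> C (w $ i)) \<and>
    (\<forall>i. \<forall>y \<in> C (w $ i).
      F (empirical w x) (w $ i) (x $ i) - F (empirical w (vupd x i y)) (w $ i) y \<le> eps)"
proof -
  have "a - (INF y\<in>C (w $ i). F (empirical w (vupd x i y)) (w $ i) y) \<le> eps \<longleftrightarrow>
      (\<forall>y \<in> C (w $ i). a - F (empirical w (vupd x i y)) (w $ i) y \<le> eps)" for a i
    using le_cINF_iff[OF C_nonempty bdd_below_empirical_payoff, of "a - eps"]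
    by (auto simp: algebra_simps)
  then show ?thesis
    by (simp add: nash_def)
qed

lemma nash_limit:
  assumes ws: "ws \<longlonglongrightarrow> w" and xs: "xs \<longlonglongrightarrow> x" and nash: "\<And>k. xs k \<in> nash eps C F (ws k)"
  shows "x \<in> nash eps C F w"
proof -
  have "x $ i \<in> C (w $ i)" for i
  proof -
    have "(ws k $ i, xs k $ i) \<in> {(w, x). x \<in> C w}" for k
      using nash[of k] by (simp add: mem_nash_iff)
    moreover have "(\<lambda>k. (ws k $ i, xs k $ i)) \<longlonglongrightarrow> (w $ i, x $ i)"
      by (intro tendsto_Pair tendsto_vec_nth ws xs)
    ultimately show ?thesis
      using closed_sequentially[OF C_graph_closed] by fastforce
  qed
  moreover have "F (empirical w x) (w $ i) (x $ i) - F (empirical w (vupd x i y)) (w $ i) y \<le> eps"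
    if y: "y \<in> C (w $ i)" for i y
  proof -
    obtain r ys where r: "strict_mono r" and ys: "\<And>k. ys k \<in> C (ws (r k) $ i)" and "ys \<longlonglongrightarrow> y"
      using C_lower[OF tendsto_vec_nth[OF ws] y] by blast
    have wr: "(\<lambda>k. ws (r k)) \<longlonglongrightarrow> w" and xr: "(\<lambda>k. xs (r k)) \<longlonglongrightarrow> x"
      using LIMSEQ_subseq_LIMSEQ[OF ws r] LIMSEQ_subseq_LIMSEQ[OF xs r] by (simp_all add: o_def)
    have lim: "(\<lambda>k. F (empirical (ws (r k)) (xs (r k))) (ws (r k) $ i) (xs (r k) $ i)
        - F (empirical (ws (r k)) (vupd (xs (r k)) i (ys k))) (ws (r k) $ i) (ys k))
      \<longlonglongrightarrow> F (empirical w x) (w $ i) (x $ i) - F (empirical w (vupd x i y)) (w $ i) y"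
      by (intro tendsto_diff tendsto_empirical_payoff[OF F_cont] tendsto_vupd tendsto_vec_nth
          wr xr \<open>ys \<longlonglongrightarrow> y\<close>)
    have bound: "F (empirical (ws (r k)) (xs (r k))) (ws (r k) $ i) (xs (r k) $ i)
        - F (empirical (ws (r k)) (vupd (xs (r k)) i (ys k))) (ws (r k) $ i) (ys k) \<le> eps" for k
      using nash[of "r k"] ys[of k] by (simp add: mem_nash_iff)
    show ?thesis
      by (intro LIMSEQ_le_const2[OF lim] exI[of _ 0] allI impI bound)
  qed
  ultimately show ?thesis
    by (simp add: mem_nash_iff)
qed

lemma closed_nash: "closed (nash eps C F w)"
  unfolding closed_sequential_limits
proof (intro allI impI, elim conjE)
  fix xs l assume xs: "\<forall>k. xs k \<in> nash eps C F w" and "xs \<longlonglongrightarrow> l"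
  show "l \<in> nash eps C F w"
    by (rule nash_limit[OF tendsto_const \<open>xs \<longlonglongrightarrow> l\<close>]) (use xs in simp)
qed

lemma closed_nash_hits:
  assumes "compact (UNIV :: 'x set)" and "closed K"
  shows "closed {w :: 'w ^ 'n. nash eps C F w \<inter> K \<noteq> {}}"
  unfolding closed_sequential_limits
proof (intro allI impI, elim conjE)
  fix ws :: "nat \<Rightarrow> 'w ^ 'n" and w
  assume "\<forall>k. ws k \<in> {w. nash eps C F w \<inter> K \<noteq> {}}" and ws: "ws \<longlonglongrightarrow> w"
  then have "\<forall>k. \<exists>x. x \<in> nash eps C F (ws k) \<inter> K"
    by blast
  from choice[OF this] obtain xs where xs: "\<forall>k. xs k \<in> nash eps C F (ws k) \<inter> K"
    by blast
  have "seq_compact (UNIV :: ('x ^ 'n) set)"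
    using compact_UNIV_vec[OF assms(1)] by (simp add: compact_eq_seq_compact_metric)
  then obtain x r where r: "strict_mono r" and xr: "(xs \<circ> r) \<longlonglongrightarrow> x"
    unfolding seq_compact_def by blast
  have "x \<in> nash eps C F w"
    by (rule nash_limit[OF LIMSEQ_subseq_LIMSEQ[OF ws r] xr]) (use xs in simp)
  moreover have "x \<in> K"
    by (rule closed_sequentially[OF \<open>closed K\<close> _ xr]) (use xs in simp)
  ultimately show "w \<in> {w. nash eps C F w \<inter> K \<noteq> {}}"
    by blast
qed

end

theorem lemma3p4:
  fixes C :: "'w::polish_space \<Rightarrow> 'x::metric_space set"
    and F :: "('w \<times> 'x) measure \<Rightarrow> 'w \<Rightarrow> 'x \<Rightarrow> real"
    and eps :: real
  assumes X_compact: "compact (UNIV :: 'x set)"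
    and C_nonempty: "\<And>w. C w \<noteq> {}"
    and C_closed: "\<And>w. closed (C w)"
    and C_graph_closed: "closed {(w, x). x \<in> C w}"
    and C_lower: "\<And>ws w x. ws \<longlonglongrightarrow> w \<Longrightarrow> x \<in> C w \<Longrightarrow>
        \<exists>r xs. strict_mono r \<and> (\<forall>k. xs k \<in> C (ws (r k))) \<and> xs \<longlonglongrightarrow> x"
    and F_bounded: "\<exists>B. \<forall>m \<in> prob_measures. \<forall>w x. \<bar>F m w x\<bar> \<le> B"
    and F_cont: "continuous_map (prod_topology weak_topology (prod_topology euclidean euclidean))
        euclideanreal (\<lambda>(m, w, x). F m w x)"
    and eps: "eps \<ge> 0"
  shows "closed (nash_domain eps C F :: ('w ^ 'n) set) \<and>
    (\<exists>h :: 'w ^ 'n \<Rightarrow> 'x ^ 'n.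
        (\<forall>w \<in> nash_domain eps C F. h w \<in> nash eps C F w) \<and>
        univ_measurable_on (nash_domain eps C F :: ('w ^ 'n) set) h)"
proof -
  \<comment> \<open>C_closed follows from C_graph_closed.\<close>
  interpret nash_game C F
    using C_nonempty C_graph_closed C_lower F_bounded F_cont by unfold_locales
  have hits_closed: "closed {w :: 'w ^ 'n. nash eps C F w \<inter> K \<noteq> {}}" if "closed K" for K
    using closed_nash_hits[OF X_compact that] .
  obtain h :: "'w ^ 'n \<Rightarrow> 'x ^ 'n" where "h \<in> borel_measurable borel"
    and h: "\<And>w. nash eps C F w \<noteq> {} \<Longrightarrow> h w \<in> nash eps C F w"
  proof (rule measurable_selection[OF compact_UNIV_vec[OF X_compact] closed_nash])
    fix K :: "('x ^ 'n) set" assume "closed K"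
    then show "{w \<in> space borel. nash eps C F w \<inter> K \<noteq> {}} \<in> sets borel"
      using hits_closed by simp
  qed blast
  have "closed (nash_domain eps C F :: ('w ^ 'n) set)"
    using hits_closed[OF closed_UNIV] by (simp add: nash_domain_def)
  moreover have "\<forall>w \<in> nash_domain eps C F. h w \<in> nash eps C F w"
    using h by (simp add: nash_domain_def)
  ultimately show ?thesis
    using borel_measurable_imp_univ_measurable_on[OF \<open>h \<in> borel_measurable borel\<close>] by blast
qed

end
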